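(* Every weakly bridged graph is a diamond-weakly modular graph.
   Context: All graphs are finite, simple and connected; $d$ denotes the shortest-path distance. A diamond is $K_4$ minus one edge. Triangle condition $(TC)$: for any three vertices $u,v,w$ with $1=d(v,w)<d(v,u)=d(u,w)$ there is a common neighbor $z$ of $v,w$ with $d(u,z)=d(u,v)-1$. Quadrangle condition $(QC)$: for any four vertices $u,v,w,y$ with $d(v,y)=d(w,y)=1$ and $2=d(v,w)\le d(u,v)=d(u,w)=d(u,y)-1$, there exists a common neighbor $z$ of $v$ and $w$ with $d(u,z)=d(u,v)-1$. A graph is weakly modular if it satisfies $(TC)$ and $(QC)$; it is weakly bridged if it is weakly modular and has no induced cycle of length four. Triangle diamond condition $(TDC)$: for any three vertices $u,v,w$ with $1=d(v,w)<d(u,v)=d(u,w)$, there exists a common neighbor $z$ of $v$ and $w$ with $d(u,z)=d(u,v)-1$ such that $z$ is adjacent to every vertex $x$ with $d(x,v)=1$, $d(u,x)=d(u,v)-1$ and to every vertex $y$ with $d(y,w)=1$, $d(u,y)=d(u,w)-1$ (so that $v,w,z$ form diamonds with such $x$ and $y$). A graph is diamond-weakly modular if it satisfies $(QC)$ and $(TDC)$. *)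

theory Defs
  imports Main
begin

inductive walk :: "('a \<Rightarrow> 'a \<Rightarrow> bool) \<Rightarrow> 'a \<Rightarrow> nat \<Rightarrow> 'a \<Rightarrow> bool" for E where
  walk_nil: "walk E x 0 x"
| walk_step: "E x y \<Longrightarrow> walk E y n z \<Longrightarrow> walk E x (Suc n) z"

definition graph :: "'a set \<Rightarrow> ('a \<Rightarrow> 'a \<Rightarrow> bool) \<Rightarrow> bool" where
  "graph V E \<longleftrightarrow> finite V \<and> V \<noteq> {} \<and>
     (\<forall>x y. E x y \<longrightarrow> x \<in> V \<and> y \<in> V) \<and>
     (\<forall>x y. E x y \<longrightarrow> E y x) \<and> (\<forall>x. \<not> E x x) \<and>
     (\<forall>x\<in>V. \<forall>y\<in>V. \<exists>n. walk E x n y)"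

definition dist :: "('a \<Rightarrow> 'a \<Rightarrow> bool) \<Rightarrow> 'a \<Rightarrow> 'a \<Rightarrow> nat" where
  "dist E x y = (LEAST n. walk E x n y)"

definition TC :: "'a set \<Rightarrow> ('a \<Rightarrow> 'a \<Rightarrow> bool) \<Rightarrow> bool" where
  "TC V E \<longleftrightarrow> (\<forall>u\<in>V. \<forall>v\<in>V. \<forall>w\<in>V.
     1 = dist E v w \<and> dist E v w < dist E v u \<and> dist E v u = dist E u w \<longrightarrow>
     (\<exists>z\<in>V. E z v \<and> E z w \<and> dist E u z = dist E u v - 1))"

definition QC :: "'a set \<Rightarrow> ('a \<Rightarrow> 'a \<Rightarrow> bool) \<Rightarrow> bool" where
  "QC V E \<longleftrightarrow> (\<forall>u\<in>V. \<forall>v\<in>V. \<forall>w\<in>V. \<forall>y\<in>V.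
     dist E v y = 1 \<and> dist E w y = 1 \<and> 2 = dist E v w \<and> dist E v w \<le> dist E u v \<and>
     dist E u v = dist E u w \<and> dist E u w = dist E u y - 1 \<longrightarrow>
     (\<exists>z\<in>V. E z v \<and> E z w \<and> dist E u z = dist E u v - 1))"

definition weakly_modular :: "'a set \<Rightarrow> ('a \<Rightarrow> 'a \<Rightarrow> bool) \<Rightarrow> bool" where
  "weakly_modular V E \<longleftrightarrow> TC V E \<and> QC V E"

definition induced_C4_free :: "'a set \<Rightarrow> ('a \<Rightarrow> 'a \<Rightarrow> bool) \<Rightarrow> bool" where
  "induced_C4_free V E \<longleftrightarrow> \<not> (\<exists>a\<in>V. \<exists>b\<in>V. \<exists>c\<in>V. \<exists>d\<in>V.
     distinct [a, b, c, d] \<and> E a b \<and> E b c \<and> E c d \<and> E d a \<and> \<not> E a c \<and> \<not> E b d)"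

definition weakly_bridged :: "'a set \<Rightarrow> ('a \<Rightarrow> 'a \<Rightarrow> bool) \<Rightarrow> bool" where
  "weakly_bridged V E \<longleftrightarrow> weakly_modular V E \<and> induced_C4_free V E"

definition TDC :: "'a set \<Rightarrow> ('a \<Rightarrow> 'a \<Rightarrow> bool) \<Rightarrow> bool" where
  "TDC V E \<longleftrightarrow> (\<forall>u\<in>V. \<forall>v\<in>V. \<forall>w\<in>V.
     1 = dist E v w \<and> dist E v w < dist E u v \<and> dist E u v = dist E u w \<longrightarrow>
     (\<exists>z\<in>V. E z v \<and> E z w \<and> dist E u z = dist E u v - 1 \<and>
        (\<forall>x\<in>V. dist E x v = 1 \<and> dist E u x = dist E u v - 1 \<longrightarrow> x = z \<or> E z x) \<and>
        (\<forall>y\<in>V. dist E y w = 1 \<and> dist E u y = dist E u w - 1 \<longrightarrow> y = z \<or> E z y)))"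

definition diamond_weakly_modular :: "'a set \<Rightarrow> ('a \<Rightarrow> 'a \<Rightarrow> bool) \<Rightarrow> bool" where
  "diamond_weakly_modular V E \<longleftrightarrow> QC V E \<and> TDC V E"

end

theory Submission
  imports Defs
begin

text \<open>In a graph satisfying QC without induced 4-cycles, the neighbours of a vertex v that
are one step closer to a base point u are pairwise adjacent: two non-adjacent ones x, x'
have a common neighbour z one step closer still (by QC, or z = u when x, x' are adjacent
to u), and then v x z x' is an induced 4-cycle. So the common neighbour of v and w that TC
provides is adjacent to every other such neighbour of v and of w, which is TDC.\<close>

lemma walk_0_iff: "walk E x 0 y \<longleftrightarrow> x = y"
  by (auto elim: walk.cases intro: walk.walk_nil)

lemma walk_1_iff: "walk E x 1 y \<longleftrightarrow> E x y"
  by (auto elim: walk.cases intro: walk.intros simp: walk_0_iff)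

lemma walk_append: "walk E x m y \<Longrightarrow> walk E y n z \<Longrightarrow> walk E x (m + n) z"
  by (induction rule: walk.induct) (auto intro: walk.intros)

lemma walk_dist: "walk E x n y \<Longrightarrow> walk E x (dist E x y) y"
  unfolding dist_def by (rule LeastI)

lemma dist_le_walk: "walk E x n y \<Longrightarrow> dist E x y \<le> n"
  unfolding dist_def by (rule Least_le)

lemma dist_self: "dist E x x = 0"
  using dist_le_walk[OF walk.walk_nil] by simp

lemma induced_C4_freeD:
  assumes "induced_C4_free V E" "a \<in> V" "b \<in> V" "c \<in> V" "d \<in> V"
    and "distinct [a, b, c, d]" "E a b" "E b c" "E c d" "E d a"
  shows "E a c \<or> E b d"
  using assms unfolding induced_C4_free_def by blast

context
  fixes V :: "'a set" and E :: "'a \<Rightarrow> 'a \<Rightarrow> bool"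
  assumes graph: "graph V E"
begin

lemma edge_sym: "E x y \<Longrightarrow> E y x"
  using graph unfolding graph_def by blast

lemma edge_irrefl: "\<not> E x x"
  using graph unfolding graph_def by blast

lemma edge_in_vertices: "E x y \<Longrightarrow> x \<in> V" "E x y \<Longrightarrow> y \<in> V"
  using graph unfolding graph_def by blast+

lemma walk_sym: "walk E x n y \<Longrightarrow> walk E y n x"
proof (induction rule: walk.induct)
  case (walk_nil x)
  show ?case by (rule walk.walk_nil)
next
  case (walk_step x y n z)
  have "walk E y 1 x"
    using walk_step.hyps(1) walk_1_iff edge_sym by metis
  with walk_step.IH show ?case
    using walk_append by fastforce
qed

lemma walk_dist_vertices: "x \<in> V \<Longrightarrow> y \<in> V \<Longrightarrow> walk E x (dist E x y) y"
  using graph unfolding graph_def by (blast intro: walk_dist)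

lemma dist_commute:
  assumes "x \<in> V" "y \<in> V"
  shows "dist E x y = dist E y x"
  using dist_le_walk[OF walk_sym[OF walk_dist_vertices]] assms
  by (metis antisym)

lemma dist_eq_0_iff: "x \<in> V \<Longrightarrow> y \<in> V \<Longrightarrow> dist E x y = 0 \<longleftrightarrow> x = y"
  using walk_dist_vertices walk_0_iff dist_self by metis

lemma dist_eq_1_iff: "x \<in> V \<Longrightarrow> y \<in> V \<Longrightarrow> dist E x y = 1 \<longleftrightarrow> E x y"
proof
  assume "x \<in> V" "y \<in> V" "dist E x y = 1"
  then show "E x y"
    using walk_dist_vertices walk_1_iff by metis
next
  assume "x \<in> V" "y \<in> V" "E x y"
  then have "dist E x y \<le> 1"
    using dist_le_walk walk_1_iff by metis
  moreover have "x \<noteq> y"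
    using \<open>E x y\<close> edge_irrefl by blast
  ultimately show "dist E x y = 1"
    using \<open>x \<in> V\<close> \<open>y \<in> V\<close> dist_eq_0_iff by fastforce
qed

lemma dist_edge_le:
  assumes "u \<in> V" "E a b"
  shows "dist E u b \<le> dist E u a + 1"
proof -
  have "walk E u (dist E u a + 1) b"
    using walk_append walk_dist_vertices walk_1_iff edge_in_vertices assms by metis
  then show ?thesis by (rule dist_le_walk)
qed

lemma dist_eq_2:
  assumes "E x v" "E v y" "x \<noteq> y" "\<not> E x y"
  shows "dist E x y = 2"
proof -
  have "walk E x (1 + 1) y"
    using walk_append assms(1,2) walk_1_iff by metis
  then have "dist E x y \<le> 2"
    using dist_le_walk by fastforce
  moreover have "x \<in> V" "y \<in> V"
    using assms edge_in_vertices by blast+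
  ultimately show ?thesis
    using assms(3,4) dist_eq_0_iff dist_eq_1_iff by fastforce
qed

lemma common_closer_neighbour:
  assumes "QC V E" "u \<in> V" "E x v" "E x' v" "x \<noteq> x'" "\<not> E x x'"
    and "dist E u x = dist E u v - 1" "dist E u x' = dist E u v - 1" "dist E u x \<ge> 1"
  obtains z where "z \<in> V" "E x z" "E z x'" "dist E u z = dist E u x - 1"
proof (cases "dist E u x = 1")
  case True
  then have "E u x" "E u x'"
    using assms(2-4,7,8) edge_in_vertices dist_eq_1_iff by metis+
  moreover have "dist E u u = dist E u x - 1"
    using True dist_self by simp
  ultimately show ?thesis
    using that assms(2) edge_sym by blast
next
  case False
  have "x \<in> V" "x' \<in> V" "v \<in> V"
    using assms(3,4) edge_in_vertices by blast+
  moreover have "dist E x v = 1" "dist E x' v = 1"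
    using assms(3,4) calculation dist_eq_1_iff by blast+
  moreover have "dist E x x' = 2"
    using dist_eq_2 edge_sym assms(3-6) by blast
  ultimately obtain z where "z \<in> V" "E z x" "E z x'" "dist E u z = dist E u x - 1"
    using assms(1,2,7-9) False unfolding QC_def by force
  then show ?thesis
    using that edge_sym by blast
qed

lemma closer_neighbours_adjacent:
  assumes "QC V E" "induced_C4_free V E" "u \<in> V" "E x v" "E x' v" "x \<noteq> x'"
    and "dist E u x = dist E u v - 1" "dist E u x' = dist E u v - 1"
  shows "E x x'"
proof (rule ccontr)
  assume "\<not> E x x'"
  have V: "x \<in> V" "x' \<in> V" "v \<in> V"
    using assms(4,5) edge_in_vertices by blast+
  have "dist E u x \<ge> 1"
  proof (rule ccontr)
    assume "\<not> dist E u x \<ge> 1"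
    then have "dist E u x = 0" "dist E u x' = 0"
      using assms(7,8) by simp_all
    then show False
      using assms(3,6) V dist_eq_0_iff by blast
  qed
  then obtain z where z: "z \<in> V" "E x z" "E z x'" "dist E u z = dist E u x - 1"
    using common_closer_neighbour assms \<open>\<not> E x x'\<close> by blast
  have "\<not> E v z"
  proof
    assume "E v z"
    then have "dist E u v \<le> dist E u z + 1"
      using dist_edge_le[OF assms(3)] edge_sym by blast
    with z(4) assms(7) \<open>dist E u x \<ge> 1\<close> show False
      by linarith
  qed
  moreover have "v \<noteq> z"
    using z(4) assms(7) \<open>dist E u x \<ge> 1\<close> by auto
  ultimately have "distinct [v, x, z, x']"
    using assms(4-6) z(2,3) edge_irrefl by auto
  then show False
    using induced_C4_freeD[OF assms(2) V(3,1) z(1) V(2)] assms(4,5) z(2,3) edge_sym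
      \<open>\<not> E v z\<close> \<open>\<not> E x x'\<close> by blast
qed

lemma TDC_if_weakly_bridged:
  assumes "weakly_bridged V E"
  shows "TDC V E"
  unfolding TDC_def
proof (intro ballI impI)
  fix u v w
  assume uvw: "u \<in> V" "v \<in> V" "w \<in> V"
    and h: "1 = dist E v w \<and> dist E v w < dist E u v \<and> dist E u v = dist E u w"
  have QC: "QC V E" and C4: "induced_C4_free V E" and TC: "TC V E"
    using assms unfolding weakly_bridged_def weakly_modular_def by blast+
  obtain z where z: "z \<in> V" "E z v" "E z w" "dist E u z = dist E u v - 1"
    using TC uvw h dist_commute[of v u] unfolding TC_def by force
  have adjacent_to_z: "x = z \<or> E z x"
    if "x \<in> V" "dist E x t = 1" "dist E u x = dist E u t - 1"
      and "E z t" "dist E u z = dist E u t - 1" for x t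
  proof -
    have "E x t"
      using that dist_eq_1_iff edge_in_vertices by blast
    then show ?thesis
      using closer_neighbours_adjacent[OF QC C4 uvw(1)] that(3-5) by blast
  qed
  have "dist E u z = dist E u w - 1"
    using z(4) h by simp
  with z adjacent_to_z[of _ v] adjacent_to_z[of _ w]
  show "\<exists>z\<in>V. E z v \<and> E z w \<and> dist E u z = dist E u v - 1 \<and>
      (\<forall>x\<in>V. dist E x v = 1 \<and> dist E u x = dist E u v - 1 \<longrightarrow> x = z \<or> E z x) \<and>
      (\<forall>y\<in>V. dist E y w = 1 \<and> dist E u y = dist E u w - 1 \<longrightarrow> y = z \<or> E z y)"
    by blast
qed

end

theorem lemma2:
  assumes "graph V E"
    and "weakly_bridged V E"
  shows "diamond_weakly_modular V E"
  using TDC_if_weakly_bridged[OF assms] assms(2)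
  unfolding diamond_weakly_modular_def weakly_bridged_def weakly_modular_def by blast

end
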